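(* Let $q\in(0,1)$, let $\omega_1,\dots,\omega_m>0$ with $\sum_{i=1}^m\omega_i=1$, and let $X_1,\dots,X_m$ be positive random variables with continuous distributions $p_1,\dots,p_m$ and all with the same finite mean $\mathbb E[X_i]=\mu>0$. Let $X$ be a random variable with the mixture distribution $p=\sum_{i=1}^m\omega_i p_i$. Then $$\kappa_q(X)\ \ge\ \sum_{i=1}^m \omega_i\,\kappa_q(X_i).$$
   Context: For a positive random variable $Y$ with continuous distribution and finite mean, and $q\in(0,1)$, the exceedance threshold is $h_Y(q)=\inf\{h\ge 0:\ \mathbb P(Y>h)\le q\}$ and the (theoretical) quantile contribution is $$\kappa_q(Y)=q\,\frac{\mathbb E[Y\mid Y>h_Y(q)]}{\mathbb E[Y]}=\frac{\mathbb E[Y\mathbf 1_{Y>h_Y(q)}]}{\mathbb E[Y]}.$$ *)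

theory Defs
  imports "HOL-Probability.Probability"
begin

definition exc_threshold :: "'a measure \<Rightarrow> ('a \<Rightarrow> real) \<Rightarrow> real \<Rightarrow> real" where
  "exc_threshold M Y q = Inf {h. h \<ge> 0 \<and> measure M {x \<in> space M. Y x > h} \<le> q}"

definition quantile_contribution :: "'a measure \<Rightarrow> ('a \<Rightarrow> real) \<Rightarrow> real \<Rightarrow> real" where
  "quantile_contribution M Y q =
     (integral\<^sup>L M (\<lambda>x. if Y x > exc_threshold M Y q then Y x else 0)) / integral\<^sup>L M Y"

end

theory Submission
  imports Defs
begin

text \<open>
  Write \<open>T Y h = E[Y 1{Y > h}]\<close> for the tail mass of \<open>Y\<close> above \<open>h\<close>.
  For any \<open>h, h'\<close> one has \<open>T Y h - T Y h' \<ge> h (P(Y > h) - P(Y > h'))\<close>, because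
  \<open>Y 1{Y>h} - Y 1{Y>h'} \<ge> h (1{Y>h} - 1{Y>h'})\<close> pointwise.  For continuous positive
  variables the threshold satisfies \<open>P(Y > h_Y(q)) = q\<close>.  Apply the inequality to each
  component with \<open>h = h_X(q)\<close>, \<open>h' = h_{X_i}(q)\<close>, multiply by \<open>\<omega>_i\<close> and sum: the
  probability terms add up to \<open>h (P(X > h) - q) = 0\<close>, and the tail masses add up to
  \<open>T X h\<close> since expectations of \<open>g(X)\<close> split over the mixture.  Dividing by the common
  mean \<open>\<mu> = E[X]\<close> gives the claim.
\<close>

section \<open>Integrals over a mixture\<close>

lemma mixture_nn_integral:
  fixes f :: "real \<Rightarrow> ennreal" and X :: "'b \<Rightarrow> real" and Xs :: "'i \<Rightarrow> 'a \<Rightarrow> real"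
  assumes f: "f \<in> borel_measurable borel"
    and X_meas: "X \<in> borel_measurable N"
    and Xs_meas: "\<And>i. i \<in> I \<Longrightarrow> Xs i \<in> borel_measurable (M i)"
    and mix: "\<And>A. A \<in> sets borel \<Longrightarrow>
        emeasure N (X -` A \<inter> space N) = (\<Sum>i\<in>I. c i * emeasure (M i) (Xs i -` A \<inter> space (M i)))"
  shows "(\<integral>\<^sup>+x. f (X x) \<partial>N) = (\<Sum>i\<in>I. c i * (\<integral>\<^sup>+x. f (Xs i x) \<partial>M i))"
  using f
proof (induct rule: borel_measurable_induct)
  case (cong f g)
  then show ?case by (simp add: fun_eq_iff)
next
  case (set A)
  have indicator_comp: "(\<integral>\<^sup>+x. indicator A (Y x) \<partial>L) = emeasure L (Y -` A \<inter> space L)"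
    if "Y \<in> borel_measurable L" for Y :: "'z \<Rightarrow> real" and L
  proof -
    have "(\<integral>\<^sup>+x. indicator A (Y x) \<partial>L) = (\<integral>\<^sup>+x. indicator (Y -` A \<inter> space L) x \<partial>L)"
      by (rule nn_integral_cong) (auto split: split_indicator)
    also have "\<dots> = emeasure L (Y -` A \<inter> space L)"
      using set that by (intro nn_integral_indicator) (simp add: measurable_sets)
    finally show ?thesis .
  qed
  show ?case
    using set X_meas Xs_meas by (simp add: indicator_comp mix)
next
  case (mult u a)
  have cmult: "(\<integral>\<^sup>+x. a * u (Y x) \<partial>L) = a * (\<integral>\<^sup>+x. u (Y x) \<partial>L)"
    if "Y \<in> borel_measurable L" for Y :: "'z \<Rightarrow> real" and L
    using measurable_compose[OF that mult(2)] by (rule nn_integral_cmult)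
  have "(\<integral>\<^sup>+x. a * u (X x) \<partial>N) = (\<Sum>i\<in>I. c i * (a * (\<integral>\<^sup>+x. u (Xs i x) \<partial>M i)))"
    using cmult[OF X_meas] by (simp add: mult(4) sum_distrib_left ac_simps)
  also have "\<dots> = (\<Sum>i\<in>I. c i * (\<integral>\<^sup>+x. a * u (Xs i x) \<partial>M i))"
    using cmult[OF Xs_meas] by simp
  finally show ?case .
next
  case (add u v)
  have add_comp: "(\<integral>\<^sup>+x. v (Y x) + u (Y x) \<partial>L) = (\<integral>\<^sup>+x. v (Y x) \<partial>L) + (\<integral>\<^sup>+x. u (Y x) \<partial>L)"
    if "Y \<in> borel_measurable L" for Y :: "'z \<Rightarrow> real" and L
    using measurable_compose[OF that add(4)] measurable_compose[OF that add(1)]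
    by (rule nn_integral_add)
  have "(\<integral>\<^sup>+x. v (X x) + u (X x) \<partial>N)
      = (\<Sum>i\<in>I. c i * (\<integral>\<^sup>+x. v (Xs i x) \<partial>M i) + c i * (\<integral>\<^sup>+x. u (Xs i x) \<partial>M i))"
    using add_comp[OF X_meas] by (simp add: add(3) add(7) sum.distrib)
  also have "\<dots> = (\<Sum>i\<in>I. c i * (\<integral>\<^sup>+x. v (Xs i x) + u (Xs i x) \<partial>M i))"
    using add_comp[OF Xs_meas] by (simp add: distrib_left)
  finally show ?case .
next
  case (seq U)
  have mono_conv: "(\<integral>\<^sup>+x. (SUP n. U n) (Y x) \<partial>L) = (SUP n. \<integral>\<^sup>+x. U n (Y x) \<partial>L)"
    if "Y \<in> borel_measurable L" for Y :: "'z \<Rightarrow> real" and L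
    using seq measurable_compose[OF that seq(1)]
    by (simp add: image_comp, intro nn_integral_monotone_convergence_SUP)
      (auto simp: incseq_def le_fun_def)
  have "(\<integral>\<^sup>+x. (SUP n. U n) (X x) \<partial>N) = (SUP n. \<Sum>i\<in>I. c i * (\<integral>\<^sup>+x. U n (Xs i x) \<partial>M i))"
    using mono_conv[OF X_meas] seq(3) by simp
  also have "\<dots> = (\<Sum>i\<in>I. SUP n. c i * (\<integral>\<^sup>+x. U n (Xs i x) \<partial>M i))"
    using seq(4) by (intro ennreal_SUP_sum)
      (auto simp: incseq_def le_fun_def intro!: mult_left_mono nn_integral_mono)
  also have "\<dots> = (\<Sum>i\<in>I. c i * (\<integral>\<^sup>+x. (SUP n. U n) (Xs i x) \<partial>M i))"
    using mono_conv[OF Xs_meas] by (simp add: SUP_mult_left_ennreal)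
  finally show ?case .
qed

lemma mixture_integral:
  fixes g :: "real \<Rightarrow> real" and X :: "'b \<Rightarrow> real" and Xs :: "'i \<Rightarrow> 'a \<Rightarrow> real"
  assumes g: "g \<in> borel_measurable borel" and g_nonneg: "\<And>t. g t \<ge> 0"
    and X_meas: "X \<in> borel_measurable N"
    and Xs_meas: "\<And>i. i \<in> I \<Longrightarrow> Xs i \<in> borel_measurable (M i)"
    and c: "\<And>i. i \<in> I \<Longrightarrow> c i \<ge> 0"
    and g_int: "\<And>i. i \<in> I \<Longrightarrow> integrable (M i) (\<lambda>x. g (Xs i x))"
    and mix: "\<And>A. A \<in> sets borel \<Longrightarrow>
        emeasure N (X -` A \<inter> space N) = (\<Sum>i\<in>I. ennreal (c i) * emeasure (M i) (Xs i -` A \<inter> space (M i)))"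
  shows "integrable N (\<lambda>x. g (X x))"
    and "integral\<^sup>L N (\<lambda>x. g (X x)) = (\<Sum>i\<in>I. c i * integral\<^sup>L (M i) (\<lambda>x. g (Xs i x)))"
proof -
  define S where "S = (\<Sum>i\<in>I. c i * integral\<^sup>L (M i) (\<lambda>x. g (Xs i x)))"
  have integral_nonneg: "integral\<^sup>L L (\<lambda>x. g (Y x)) \<ge> 0" for L and Y :: "'z \<Rightarrow> real"
    using g_nonneg by (simp add: integral_nonneg_AE)
  have S_nonneg: "S \<ge> 0"
    unfolding S_def using c integral_nonneg by (intro sum_nonneg mult_nonneg_nonneg) auto
  have "(\<integral>\<^sup>+x. ennreal (g (X x)) \<partial>N) = (\<Sum>i\<in>I. ennreal (c i) * (\<integral>\<^sup>+x. ennreal (g (Xs i x)) \<partial>M i))"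
    using mixture_nn_integral[OF _ X_meas Xs_meas mix, of "\<lambda>t. ennreal (g t)"] g by simp
  also have "\<dots> = (\<Sum>i\<in>I. ennreal (c i * integral\<^sup>L (M i) (\<lambda>x. g (Xs i x))))"
    using g_int g_nonneg c integral_nonneg
    by (intro sum.cong refl) (simp add: nn_integral_eq_integral ennreal_mult)
  also have "\<dots> = ennreal S"
    unfolding S_def by (auto intro!: sum_ennreal mult_nonneg_nonneg c integral_nonneg)
  finally have nn: "(\<integral>\<^sup>+x. ennreal (g (X x)) \<partial>N) = ennreal S" .
  show int: "integrable N (\<lambda>x. g (X x))"
    using measurable_compose[OF X_meas g] g_nonneg nn by (intro integrableI_nonneg) auto
  have "ennreal (integral\<^sup>L N (\<lambda>x. g (X x))) = ennreal S"
    using nn_integral_eq_integral[OF int] g_nonneg nn by auto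
  then show "integral\<^sup>L N (\<lambda>x. g (X x)) = S"
    using S_nonneg integral_nonneg[of N X] by simp
qed

lemma mixture_emeasure:
  fixes X :: "'b \<Rightarrow> real" and Xs :: "'i \<Rightarrow> 'a \<Rightarrow> real"
  assumes N: "prob_space N" and M: "\<And>i. i \<in> I \<Longrightarrow> prob_space (M i)"
    and c: "\<And>i. i \<in> I \<Longrightarrow> c i \<ge> 0"
    and mix: "\<And>A. A \<in> sets borel \<Longrightarrow>
        measure N (X -` A \<inter> space N) = (\<Sum>i\<in>I. c i * measure (M i) (Xs i -` A \<inter> space (M i)))"
    and A: "A \<in> sets borel"
  shows "emeasure N (X -` A \<inter> space N) = (\<Sum>i\<in>I. ennreal (c i) * emeasure (M i) (Xs i -` A \<inter> space (M i)))"
proof -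
  have prob_emeasure: "emeasure L B = ennreal (measure L B)" if "prob_space L" for L :: "'z measure" and B
    using finite_measure.emeasure_eq_measure[OF prob_space.finite_measure[OF that]] .
  have "emeasure N (X -` A \<inter> space N) = ennreal (\<Sum>i\<in>I. c i * measure (M i) (Xs i -` A \<inter> space (M i)))"
    using mix[OF A] prob_emeasure[OF N] by simp
  also have "\<dots> = (\<Sum>i\<in>I. ennreal (c i * measure (M i) (Xs i -` A \<inter> space (M i))))"
    using c by (intro sum_ennreal[symmetric]) simp
  also have "\<dots> = (\<Sum>i\<in>I. ennreal (c i) * emeasure (M i) (Xs i -` A \<inter> space (M i)))"
    using c prob_emeasure[OF M] by (intro sum.cong refl) (simp add: ennreal_mult)
  finally show ?thesis .
qed

lemma mixture_atomless:
  fixes X :: "'b \<Rightarrow> real" and Xs :: "'i \<Rightarrow> 'a \<Rightarrow> real"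
  assumes mix: "\<And>A. A \<in> sets borel \<Longrightarrow>
        measure N (X -` A \<inter> space N) = (\<Sum>i\<in>I. c i * measure (M i) (Xs i -` A \<inter> space (M i)))"
    and atomless: "\<And>i y. i \<in> I \<Longrightarrow> measure (M i) {x \<in> space (M i). Xs i x = y} = 0"
  shows "measure N {x \<in> space N. X x = y} = 0"
proof -
  have atom_set: "\<And>L Y. Y -` {y} \<inter> space L = {x \<in> space L. Y x = y}" by auto
  have "measure N (X -` {y} \<inter> space N) = (\<Sum>i\<in>I. c i * measure (M i) (Xs i -` {y} \<inter> space (M i)))"
    by (rule mix) simp
  with atomless show ?thesis by (simp add: atom_set)
qed

lemma AE_pos_iff_prob_eq_1:
  assumes P: "prob_space M" and Y_meas: "Y \<in> borel_measurable M"
  shows "(AE x in M. Y x > 0) \<longleftrightarrow> measure M {x \<in> space M. Y x > (0::real)} = 1"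
proof -
  have "{x \<in> space M. Y x > 0} \<in> sets M" using Y_meas by measurable
  then show ?thesis using prob_space.prob_Collect_eq_1[OF P] by simp
qed

lemma mixture_AE_pos:
  fixes X :: "'b \<Rightarrow> real" and Xs :: "'i \<Rightarrow> 'a \<Rightarrow> real"
  assumes N: "prob_space N" and M: "\<And>i. i \<in> I \<Longrightarrow> prob_space (M i)"
    and X_meas: "X \<in> borel_measurable N"
    and Xs_meas: "\<And>i. i \<in> I \<Longrightarrow> Xs i \<in> borel_measurable (M i)"
    and c_sum: "(\<Sum>i\<in>I. c i) = 1"
    and mix: "\<And>A. A \<in> sets borel \<Longrightarrow>
        measure N (X -` A \<inter> space N) = (\<Sum>i\<in>I. c i * measure (M i) (Xs i -` A \<inter> space (M i)))"
    and Xs_pos: "\<And>i. i \<in> I \<Longrightarrow> AE x in M i. Xs i x > 0"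
  shows "AE x in N. X x > 0"
proof -
  have pos_set: "\<And>L Y. Y -` {0<..} \<inter> space L = {x \<in> space L. Y x > 0}" by auto
  have "measure N (X -` {0<..} \<inter> space N) = (\<Sum>i\<in>I. c i * measure (M i) (Xs i -` {0<..} \<inter> space (M i)))"
    by (rule mix) simp
  then have "measure N {x \<in> space N. X x > 0} = (\<Sum>i\<in>I. c i * measure (M i) {x \<in> space (M i). Xs i x > 0})"
    by (simp add: pos_set)
  also have "\<dots> = (\<Sum>i\<in>I. c i)"
    using Xs_pos AE_pos_iff_prob_eq_1[OF M Xs_meas] by simp
  finally show ?thesis
    using AE_pos_iff_prob_eq_1[OF N X_meas] c_sum by simp
qed

lemma mixture_mean:
  fixes X :: "'b \<Rightarrow> real" and Xs :: "'i \<Rightarrow> 'a \<Rightarrow> real"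
  assumes mix: "\<And>A. A \<in> sets borel \<Longrightarrow>
        emeasure N (X -` A \<inter> space N) = (\<Sum>i\<in>I. ennreal (c i) * emeasure (M i) (Xs i -` A \<inter> space (M i)))"
    and c: "\<And>i. i \<in> I \<Longrightarrow> c i \<ge> 0"
    and X_meas: "X \<in> borel_measurable N" and X_pos: "AE x in N. X x > 0"
    and Xs_meas: "\<And>i. i \<in> I \<Longrightarrow> Xs i \<in> borel_measurable (M i)"
    and Xs_pos: "\<And>i. i \<in> I \<Longrightarrow> AE x in M i. Xs i x > 0"
    and Xs_int: "\<And>i. i \<in> I \<Longrightarrow> integrable (M i) (Xs i)"
  shows "integral\<^sup>L N X = (\<Sum>i\<in>I. c i * integral\<^sup>L (M i) (Xs i))"
proof -
  have pos_part: "integral\<^sup>L L Y = integral\<^sup>L L (\<lambda>x. max 0 (Y x))"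
    if "Y \<in> borel_measurable L" "AE x in L. Y x > 0" for L and Y :: "'z \<Rightarrow> real"
    using that by (intro integral_cong_AE) auto
  have "integral\<^sup>L N (\<lambda>x. max 0 (X x)) = (\<Sum>i\<in>I. c i * integral\<^sup>L (M i) (\<lambda>x. max 0 (Xs i x)))"
    using Xs_int Xs_meas X_meas c mix by (intro mixture_integral(2)) auto
  then show ?thesis
    using pos_part[OF X_meas X_pos] pos_part[OF Xs_meas Xs_pos] by simp
qed

section \<open>The exceedance threshold\<close>

text \<open>A continuous function \<open>G\<close> with \<open>G 0 = 1\<close> and \<open>G \<rightarrow> 0\<close> at infinity attains the
  level \<open>q \<in> (0,1)\<close> at the infimum of \<open>{h \<ge> 0. G h \<le> q}\<close>: this infimum belongs to the
  (closed, nonempty) set, and \<open>G\<close> cannot be strictly below \<open>q\<close> there by continuity.\<close>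
lemma Inf_level_set_attained:
  fixes G :: "real \<Rightarrow> real"
  assumes G_cont: "continuous_on UNIV G" and G_lim: "(G \<longlongrightarrow> 0) at_top"
    and G0: "G 0 = 1" and q: "0 < q" "q < 1"
  shows "Inf {h. h \<ge> 0 \<and> G h \<le> q} \<ge> 0" and "G (Inf {h. h \<ge> 0 \<and> G h \<le> q}) = q"
proof -
  define S where "S = {h. h \<ge> 0 \<and> G h \<le> q}"
  define t where "t = Inf S"
  obtain H where H: "\<And>h. h \<ge> H \<Longrightarrow> G h < q"
    using order_tendstoD(2)[OF G_lim q(1)] by (auto simp: eventually_at_top_linorder)
  have "max H 0 \<in> S" using H[of "max H 0"] unfolding S_def by auto
  moreover have bdd: "bdd_below S" unfolding S_def by (auto intro: bdd_belowI[where m=0])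
  moreover have "closed S"
    unfolding S_def Collect_conj_eq using G_cont
    by (intro closed_Int closed_Collect_le continuous_intros) auto
  ultimately have "t \<in> S" unfolding t_def using closed_contains_Inf by blast
  then have t0: "t \<ge> 0" and Gt: "G t \<le> q" unfolding S_def by auto
  have t_pos: "t > 0" using t0 Gt G0 q by (cases "t = 0") auto
  have "G t = q"
  proof (rule ccontr)
    assume "G t \<noteq> q"
    with Gt have "G t < q" by simp
    then have "\<forall>\<^sub>F h in at t. G h < q"
      using G_cont unfolding continuous_on_def by (intro order_tendstoD) (auto intro: tendsto_within_subset)
    then obtain d where d: "d > 0" "\<And>h. h \<noteq> t \<Longrightarrow> dist h t < d \<Longrightarrow> G h < q"
      by (auto simp: eventually_at)
    define h where "h = t - min d t / 2"
    have "h \<in> S" unfolding S_def h_def using d t_pos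
      by (auto intro!: less_imp_le[OF d(2)] simp: dist_real_def)
    then have "t \<le> h" unfolding t_def using bdd by (rule cInf_lower)
    then show False unfolding h_def using d t_pos by simp
  qed
  then show "Inf S \<ge> 0" "G (Inf S) = q" using t0 unfolding t_def by auto
qed

text \<open>The tail probability \<open>h \<mapsto> P(Y > h)\<close> of an atomless real variable is continuous
  and vanishes at infinity (it is \<open>1 - F_Y\<close> for the distribution function \<open>F_Y\<close>).\<close>
lemma tail_prob_continuous:
  fixes Y :: "'a \<Rightarrow> real"
  assumes P: "prob_space M" and Y_meas: "Y \<in> borel_measurable M"
    and atomless: "\<And>y. measure M {x \<in> space M. Y x = y} = 0"
  shows "continuous_on UNIV (\<lambda>h. measure M {x \<in> space M. Y x > h})"
    and "((\<lambda>h. measure M {x \<in> space M. Y x > h}) \<longlongrightarrow> 0) at_top"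
proof -
  interpret prob_space M by (rule P)
  define D where "D = distr M borel Y"
  interpret D: real_distribution D unfolding D_def using Y_meas by simp
  have tail_eq: "(\<lambda>h. measure M {x \<in> space M. Y x > h}) = (\<lambda>h. 1 - cdf D h)"
  proof
    fix h
    have "cdf D h = measure M (space M - {x \<in> space M. Y x > h})"
      unfolding cdf_def D_def using Y_meas
      by (subst measure_distr) (auto intro!: arg_cong[where f="measure M"])
    then show "measure M {x \<in> space M. Y x > h} = 1 - cdf D h"
      using Y_meas by (subst (asm) prob_compl) auto
  qed
  have "isCont (cdf D) h" for h
  proof -
    have "measure D {h} = measure M {x \<in> space M. Y x = h}"
      unfolding D_def using Y_meas
      by (subst measure_distr) (auto intro!: arg_cong[where f="measure M"])
    then show ?thesis using atomless by (simp add: D.isCont_cdf)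
  qed
  then show "continuous_on UNIV (\<lambda>h. measure M {x \<in> space M. Y x > h})"
    unfolding tail_eq by (intro continuous_at_imp_continuous_on continuous_intros) auto
  show "((\<lambda>h. measure M {x \<in> space M. Y x > h}) \<longlongrightarrow> 0) at_top"
    unfolding tail_eq using tendsto_diff[OF tendsto_const D.cdf_lim_at_top_prob, of 1] by simp
qed

lemma exc_threshold_tail_prob:
  fixes Y :: "'a \<Rightarrow> real"
  assumes P: "prob_space M" and Y_meas: "Y \<in> borel_measurable M"
    and atomless: "\<And>y. measure M {x \<in> space M. Y x = y} = 0"
    and Y_pos: "AE x in M. Y x > 0"
    and q: "0 < q" "q < 1"
  shows "exc_threshold M Y q \<ge> 0" and "measure M {x \<in> space M. Y x > exc_threshold M Y q} = q"
proof -
  have "measure M {x \<in> space M. Y x > 0} = 1"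
    using Y_pos AE_pos_iff_prob_eq_1[OF P Y_meas] by simp
  then show "exc_threshold M Y q \<ge> 0" "measure M {x \<in> space M. Y x > exc_threshold M Y q} = q"
    using Inf_level_set_attained[OF tail_prob_continuous[OF P Y_meas atomless] _ q]
    unfolding exc_threshold_def by auto
qed

section \<open>Comparing tail masses\<close>

text \<open>Moving the threshold from \<open>h'\<close> to \<open>h\<close> changes the tail mass by at least \<open>h\<close> times
  the change in tail probability, as
  \<open>Y 1{Y>h} - Y 1{Y>h'} \<ge> h (1{Y>h} - 1{Y>h'})\<close> holds pointwise.\<close>
lemma tail_mass_diff_ge:
  fixes Y :: "'a \<Rightarrow> real"
  assumes P: "finite_measure M" and Y_meas: "Y \<in> borel_measurable M" and Y_int: "integrable M Y"
  shows "integral\<^sup>L M (\<lambda>x. if Y x > h then Y x else 0) - integral\<^sup>L M (\<lambda>x. if Y x > h' then Y x else 0)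
     \<ge> h * (measure M {x \<in> space M. Y x > h} - measure M {x \<in> space M. Y x > h'})"
proof -
  interpret finite_measure M by (rule P)
  have tail_int: "integrable M (\<lambda>x. if Y x > a then Y x else 0)" for a
    by (rule Bochner_Integration.integrable_bound[OF Y_int]) (use Y_meas in auto)
  define E where "E a = {x \<in> space M. Y x > a}" for a
  have E_sets: "E a \<in> sets M" for a unfolding E_def using Y_meas by measurable
  have "h * (measure M (E h) - measure M (E h'))
      = integral\<^sup>L M (\<lambda>x. h * (indicator (E h) x - indicator (E h') x))"
    using E_sets by (simp add: emeasure_eq_measure)
  also have "\<dots> \<le> integral\<^sup>L M (\<lambda>x. (if Y x > h then Y x else 0) - (if Y x > h' then Y x else 0))"
  proof (rule integral_mono)
    show "integrable M (\<lambda>x. h * (indicator (E h) x - indicator (E h') x))"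
      using E_sets by (intro integrable_mult_right Bochner_Integration.integrable_diff integrable_indicator)
        (auto simp: emeasure_eq_measure)
    show "integrable M (\<lambda>x. (if Y x > h then Y x else 0) - (if Y x > h' then Y x else 0))"
      using tail_int[of h] tail_int[of h'] by (rule Bochner_Integration.integrable_diff)
  qed (auto simp: indicator_def E_def)
  also have "\<dots> = integral\<^sup>L M (\<lambda>x. if Y x > h then Y x else 0) - integral\<^sup>L M (\<lambda>x. if Y x > h' then Y x else 0)"
    by (rule Bochner_Integration.integral_diff[OF tail_int tail_int])
  finally show ?thesis unfolding E_def .
qed

lemma mixture_tail_mass_dominates:
  fixes X :: "'b \<Rightarrow> real" and Xs :: "'i \<Rightarrow> 'a \<Rightarrow> real"
  assumes N: "prob_space N" and M: "\<And>i. i \<in> I \<Longrightarrow> prob_space (M i)"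
    and c: "\<And>i. i \<in> I \<Longrightarrow> c i \<ge> 0" and c_sum: "(\<Sum>i\<in>I. c i) = 1"
    and X_meas: "X \<in> borel_measurable N"
    and Xs_meas: "\<And>i. i \<in> I \<Longrightarrow> Xs i \<in> borel_measurable (M i)"
    and Xs_int: "\<And>i. i \<in> I \<Longrightarrow> integrable (M i) (Xs i)"
    and mix: "\<And>A. A \<in> sets borel \<Longrightarrow>
        measure N (X -` A \<inter> space N) = (\<Sum>i\<in>I. c i * measure (M i) (Xs i -` A \<inter> space (M i)))"
    and h: "h \<ge> 0" "measure N {x \<in> space N. X x > h} = q"
    and hs: "\<And>i. i \<in> I \<Longrightarrow> measure (M i) {x \<in> space (M i). Xs i x > hs i} = q"
  shows "(\<Sum>i\<in>I. c i * integral\<^sup>L (M i) (\<lambda>x. if Xs i x > hs i then Xs i x else 0))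
      \<le> integral\<^sup>L N (\<lambda>x. if X x > h then X x else 0)"
proof -
  define T where "T i a = integral\<^sup>L (M i) (\<lambda>x. if Xs i x > a then Xs i x else 0)" for i a
  define P where "P i a = measure (M i) {x \<in> space (M i). Xs i x > a}" for i a
  have tail_split: "integral\<^sup>L N (\<lambda>x. if X x > h then X x else 0) = (\<Sum>i\<in>I. c i * T i h)"
    unfolding T_def
  proof (rule mixture_integral(2)[where g="\<lambda>t. if t > h then t else 0"])
    show "\<And>i. i \<in> I \<Longrightarrow> integrable (M i) (\<lambda>x. if Xs i x > h then Xs i x else 0)"
      by (rule Bochner_Integration.integrable_bound[OF Xs_int]) (use Xs_meas in auto)
  qed (use h(1) X_meas Xs_meas c mixture_emeasure[OF N M c mix] in auto)
  have prob_split: "measure N {x \<in> space N. X x > h} = (\<Sum>i\<in>I. c i * P i h)"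
  proof -
    have "X -` {h<..} \<inter> space N = {x \<in> space N. X x > h}"
      and "\<And>i. Xs i -` {h<..} \<inter> space (M i) = {x \<in> space (M i). Xs i x > h}" by auto
    moreover have "measure N (X -` {h<..} \<inter> space N) = (\<Sum>i\<in>I. c i * measure (M i) (Xs i -` {h<..} \<inter> space (M i)))"
      by (rule mix) simp
    ultimately show ?thesis unfolding P_def by simp
  qed
  have "(\<Sum>i\<in>I. c i * T i (hs i)) \<le> (\<Sum>i\<in>I. c i * (T i h - h * (P i h - q)))"
  proof (rule sum_mono)
    fix i assume i: "i \<in> I"
    have "T i (hs i) \<le> T i h - h * (P i h - q)"
      using tail_mass_diff_ge[OF prob_space.finite_measure[OF M] Xs_meas Xs_int, OF i i i, of h "hs i"] hs[OF i]
      unfolding T_def P_def by simp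
    then show "c i * T i (hs i) \<le> c i * (T i h - h * (P i h - q))"
      using c[OF i] by (rule mult_left_mono)
  qed
  also have "\<dots> = (\<Sum>i\<in>I. c i * T i h) - h * ((\<Sum>i\<in>I. c i * P i h) - q * (\<Sum>i\<in>I. c i))"
    by (simp add: algebra_simps sum_subtractf sum_distrib_left sum_distrib_right sum.distrib)
  also have "\<dots> = integral\<^sup>L N (\<lambda>x. if X x > h then X x else 0)"
    using tail_split prob_split h(2) c_sum by simp
  finally show ?thesis unfolding T_def .
qed

theorem mainTheorem4:
  fixes q \<mu> :: real and m :: nat and \<omega> :: "nat \<Rightarrow> real"
    and M :: "nat \<Rightarrow> 'a measure" and Xs :: "nat \<Rightarrow> 'a \<Rightarrow> real"
    and N :: "'b measure" and X :: "'b \<Rightarrow> real"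
  assumes q: "0 < q" "q < 1"
    and \<omega>_pos: "\<And>i. i \<in> {1..m} \<Longrightarrow> \<omega> i > 0"
    and \<omega>_sum: "(\<Sum>i=1..m. \<omega> i) = 1"
    and M_prob: "\<And>i. i \<in> {1..m} \<Longrightarrow> prob_space (M i)"
    and Xs_meas: "\<And>i. i \<in> {1..m} \<Longrightarrow> Xs i \<in> borel_measurable (M i)"
    and Xs_pos: "\<And>i. i \<in> {1..m} \<Longrightarrow> AE x in M i. Xs i x > 0"
    and Xs_cont: "\<And>i y. i \<in> {1..m} \<Longrightarrow> measure (M i) {x \<in> space (M i). Xs i x = y} = 0"
    and Xs_int: "\<And>i. i \<in> {1..m} \<Longrightarrow> integrable (M i) (Xs i)"
    and Xs_mean: "\<And>i. i \<in> {1..m} \<Longrightarrow> integral\<^sup>L (M i) (Xs i) = \<mu>"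
    and \<mu>_pos: "\<mu> > 0"
    and N_prob: "prob_space N"
    and X_meas: "X \<in> borel_measurable N"
    and X_mix: "\<And>A. A \<in> sets borel \<Longrightarrow>
        measure N (X -` A \<inter> space N) = (\<Sum>i=1..m. \<omega> i * measure (M i) (Xs i -` A \<inter> space (M i)))"
  shows "quantile_contribution N X q \<ge> (\<Sum>i=1..m. \<omega> i * quantile_contribution (M i) (Xs i) q)"
proof -
  have \<omega>_nonneg: "\<And>i. i \<in> {1..m} \<Longrightarrow> \<omega> i \<ge> 0" using \<omega>_pos by (simp add: less_imp_le)
  have X_pos: "AE x in N. X x > 0"
    by (rule mixture_AE_pos[OF N_prob M_prob X_meas Xs_meas \<omega>_sum X_mix Xs_pos])
  have X_cont: "\<And>y. measure N {x \<in> space N. X x = y} = 0"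
    by (rule mixture_atomless[OF X_mix Xs_cont])
  have "integral\<^sup>L N X = (\<Sum>i=1..m. \<omega> i * integral\<^sup>L (M i) (Xs i))"
    by (rule mixture_mean[OF mixture_emeasure[OF N_prob M_prob \<omega>_nonneg X_mix] \<omega>_nonneg X_meas X_pos
          Xs_meas Xs_pos Xs_int])
  also have "\<dots> = (\<Sum>i=1..m. \<omega> i) * \<mu>"
    using Xs_mean by (simp add: sum_distrib_right)
  finally have X_mean: "integral\<^sup>L N X = \<mu>"
    using \<omega>_sum by simp
  define h where "h = exc_threshold N X q"
  define hs where "hs i = exc_threshold (M i) (Xs i) q" for i
  have h: "h \<ge> 0" "measure N {x \<in> space N. X x > h} = q"
    using exc_threshold_tail_prob[OF N_prob X_meas X_cont X_pos q] unfolding h_def by auto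
  have hs: "measure (M i) {x \<in> space (M i). Xs i x > hs i} = q" if "i \<in> {1..m}" for i
    using exc_threshold_tail_prob(2)[OF M_prob Xs_meas Xs_cont Xs_pos q, OF that that that that]
    unfolding hs_def .
  have "(\<Sum>i=1..m. \<omega> i * quantile_contribution (M i) (Xs i) q)
      = (\<Sum>i=1..m. \<omega> i * integral\<^sup>L (M i) (\<lambda>x. if Xs i x > hs i then Xs i x else 0)) / \<mu>"
    unfolding quantile_contribution_def hs_def sum_divide_distrib by (intro sum.cong refl) (simp add: Xs_mean)
  also have "\<dots> \<le> integral\<^sup>L N (\<lambda>x. if X x > h then X x else 0) / \<mu>"
    using mixture_tail_mass_dominates[OF N_prob M_prob \<omega>_nonneg \<omega>_sum X_meas Xs_meas Xs_int X_mix h hs]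
      \<mu>_pos by (simp add: divide_right_mono)
  also have "\<dots> = quantile_contribution N X q"
    unfolding quantile_contribution_def X_mean h_def ..
  finally show ?thesis .
qed

end
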